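(* Let $f:\mathbb{R}^n\to\mathbb{R}$ be a continuous loss function which is strictly convex and $L$-smooth, with global minimum $w^*$, and let $E(w):=f(w)-f(w^* )$. Consider sequences $(w_i)$ generated by the Loss-Guarded L2O algorithm using deterministic gradient descent with step size $\frac{\alpha}{L}$, $\alpha\in\,]0,2[$, as the guarding mechanism. Then $E$ is a Lyapunov function for such sequences, i.e.: (1) $E$ is continuous; (2) $E(w)=0$ if and only if $w=w^*$; (3) $E(w)>0$ if and only if $w\neq w^*$; (4) $E(w_{i+1})\le E(w_i)$ for all $i\in\mathbb{N}$.
   Context: Loss-Guarded L2O algorithm with deterministic gradient descent: at each step $i$, an arbitrary black-box rule proposes a point $y_i$, the fallback proposes $z_i=w_i-\frac{\alpha}{L}\nabla f(w_i)$, and $w_{i+1}=y_i$ if $f(y_i)<f(z_i)$, otherwise $w_{i+1}=z_i$. $f$ is $L$-smooth means $f(y)\le f(x)+\langle\nabla f(x),y-x\rangle+\frac{L}{2}\|y-x\|_2^2$ for all $x,y$. *)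

theory Defs
  imports "HOL-Analysis.Analysis"
begin

definition strictly_convex_on :: "'a::real_vector set \<Rightarrow> ('a \<Rightarrow> real) \<Rightarrow> bool" where
  "strictly_convex_on S f \<longleftrightarrow>
     (\<forall>x\<in>S. \<forall>y\<in>S. x \<noteq> y \<longrightarrow> (\<forall>t::real. 0 < t \<and> t < 1 \<longrightarrow>
        f ((1 - t) *\<^sub>R x + t *\<^sub>R y) < (1 - t) * f x + t * f y))"

definition L_smooth :: "real \<Rightarrow> ('a::real_inner \<Rightarrow> real) \<Rightarrow> ('a \<Rightarrow> 'a) \<Rightarrow> bool" where
  "L_smooth L f g \<longleftrightarrow>
     (\<forall>x y. f y \<le> f x + inner (g x) (y - x) + L / 2 * (norm (y - x))\<^sup>2)"

definition gd_step :: "real \<Rightarrow> real \<Rightarrow> ('a::real_inner \<Rightarrow> 'a) \<Rightarrow> 'a \<Rightarrow> 'a" where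
  "gd_step \<alpha> L g w = w - (\<alpha> / L) *\<^sub>R g w"

text \<open>(w_i) is generated by Loss-Guarded L2O from black-box proposals (y_i),
  with gradient descent as guard.\<close>
definition loss_guarded_L2O ::
  "('a::real_inner \<Rightarrow> real) \<Rightarrow> ('a \<Rightarrow> 'a) \<Rightarrow> real \<Rightarrow> real \<Rightarrow> (nat \<Rightarrow> 'a) \<Rightarrow> (nat \<Rightarrow> 'a) \<Rightarrow> bool" where
  "loss_guarded_L2O f g L \<alpha> y w \<longleftrightarrow>
     (\<forall>i. w (Suc i) = (if f (y i) < f (gd_step \<alpha> L g (w i)) then y i else gd_step \<alpha> L g (w i)))"

end

theory Submission
  imports Defs
begin

text \<open>
  The L-smoothness inequality at the gradient step \<open>z = w - (\<alpha>/L) \<nabla>f(w)\<close> gives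
  \<open>f z \<le> f w - (\<alpha>/L)(1 - \<alpha>/2) \<parallel>\<nabla>f(w)\<parallel>\<^sup>2\<close>, so for \<open>0 \<le> \<alpha> \<le> 2\<close> the fallback never
  increases the loss, and the guard accepts the black-box proposal only when it is better
  still. That \<open>E\<close> vanishes only at \<open>w*\<close> is strict convexity: the midpoint of two distinct
  minimizers would have strictly smaller loss.
\<close>

lemma strictly_convex_on_minimizer_unique:
  assumes sconv: "strictly_convex_on S f" and "convex S"
    and "x \<in> S" "y \<in> S"
    and min: "\<And>v. v \<in> S \<Longrightarrow> f x \<le> f v"
    and eq: "f y = f x"
  shows "y = x"
proof (rule ccontr)
  assume "y \<noteq> x"
  let ?m = "(1 - 1/2) *\<^sub>R y + (1/2::real) *\<^sub>R x"
  have sconv_yx: "\<forall>t::real. 0 < t \<and> t < 1 \<longrightarrow> f ((1 - t) *\<^sub>R y + t *\<^sub>R x) < (1 - t) * f y + t * f x"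
    using sconv \<open>y \<noteq> x\<close> \<open>x \<in> S\<close> \<open>y \<in> S\<close> unfolding strictly_convex_on_def by blast
  have "f ?m < (1 - 1/2) * f y + 1/2 * f x"
    using sconv_yx[rule_format, of "1/2"] by simp
  moreover have "?m \<in> S"
    using \<open>convex S\<close> \<open>x \<in> S\<close> \<open>y \<in> S\<close> by (simp add: convex_def)
  ultimately show False
    using min eq by fastforce
qed

lemma L_smooth_gd_step_descent:
  assumes smooth: "L_smooth L f g" and "L > 0"
  shows "f (gd_step \<alpha> L g x) \<le> f x - (\<alpha> / L) * (1 - \<alpha> / 2) * (norm (g x))\<^sup>2"
proof -
  let ?z = "gd_step \<alpha> L g x"
  have "f ?z \<le> f x + inner (g x) (?z - x) + L / 2 * (norm (?z - x))\<^sup>2"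
    using smooth unfolding L_smooth_def by blast
  also have "?z - x = - ((\<alpha> / L) *\<^sub>R g x)"
    unfolding gd_step_def by simp
  also have "inner (g x) (- ((\<alpha> / L) *\<^sub>R g x)) = - (\<alpha> / L) * (norm (g x))\<^sup>2"
    by (simp add: power2_norm_eq_inner)
  also have "(norm (- ((\<alpha> / L) *\<^sub>R g x)))\<^sup>2 = (\<alpha> / L)\<^sup>2 * (norm (g x))\<^sup>2"
    by (simp add: power_mult_distrib power_divide)
  also have "L / 2 * ((\<alpha> / L)\<^sup>2 * (norm (g x))\<^sup>2) = (\<alpha> / L) * (\<alpha> / 2) * (norm (g x))\<^sup>2"
    using \<open>L > 0\<close> by (simp add: power2_eq_square)
  finally show ?thesis
    by (simp add: algebra_simps)
qed

lemma L_smooth_gd_step_le: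
  assumes "L_smooth L f g" "L > 0" "0 \<le> \<alpha>" "\<alpha> \<le> 2"
  shows "f (gd_step \<alpha> L g x) \<le> f x"
proof -
  have "0 \<le> (\<alpha> / L) * (1 - \<alpha> / 2) * (norm (g x))\<^sup>2"
    using assms by simp
  then show ?thesis
    using L_smooth_gd_step_descent[OF assms(1,2), where \<alpha>=\<alpha> and x=x] by linarith
qed

lemma loss_guarded_L2O_le_gd_step:
  assumes "loss_guarded_L2O f g L \<alpha> y w"
  shows "f (w (Suc i)) \<le> f (gd_step \<alpha> L g (w i))"
  using assms unfolding loss_guarded_L2O_def by (metis order_less_imp_le order_refl)

lemma loss_guarded_L2O_loss_nonincreasing:
  assumes "loss_guarded_L2O f g L \<alpha> y w" "L_smooth L f g" "L > 0" "0 \<le> \<alpha>" "\<alpha> \<le> 2"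
  shows "f (w (Suc i)) \<le> f (w i)"
  using loss_guarded_L2O_le_gd_step[OF assms(1)] L_smooth_gd_step_le[OF assms(2-5)]
  by (rule order_trans)

theorem theorem2:
  fixes f :: "real ^ 'n \<Rightarrow> real" and g :: "real ^ 'n \<Rightarrow> real ^ 'n"
    and L \<alpha> :: real and wstar :: "real ^ 'n"
    and y w :: "nat \<Rightarrow> real ^ 'n" and E :: "real ^ 'n \<Rightarrow> real"
  assumes cont: "continuous_on UNIV f"
    and grad: "\<And>x. (f has_derivative (\<lambda>h. inner (g x) h)) (at x)"
    and sconv: "strictly_convex_on UNIV f"
    and Lpos: "L > 0"
    and smooth: "L_smooth L f g"
    and min: "\<And>v. f wstar \<le> f v"
    and E_def: "\<And>v. E v = f v - f wstar"
    and alpha: "0 < \<alpha>" "\<alpha> < 2"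
    and alg: "loss_guarded_L2O f g L \<alpha> y w"
  shows "continuous_on UNIV E
       \<and> (\<forall>v. E v = 0 \<longleftrightarrow> v = wstar)
       \<and> (\<forall>v. E v > 0 \<longleftrightarrow> v \<noteq> wstar)
       \<and> (\<forall>i. E (w (Suc i)) \<le> E (w i))"
proof -
  have E_eq: "E = (\<lambda>v. f v - f wstar)"
    using E_def by blast
  have zero_iff: "E v = 0 \<longleftrightarrow> v = wstar" for v
    using strictly_convex_on_minimizer_unique[OF sconv convex_UNIV, of wstar v] min
    by (auto simp: E_eq)
  have E_nonneg: "E v \<ge> 0" for v
    using min[of v] by (simp add: E_eq)
  have "E v > 0 \<longleftrightarrow> v \<noteq> wstar" for v
    using zero_iff[of v] E_nonneg[of v] by linarith
  moreover have "E (w (Suc i)) \<le> E (w i)" for i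
    using loss_guarded_L2O_loss_nonincreasing[OF alg smooth Lpos] alpha by (simp add: E_eq)
  moreover have "continuous_on UNIV E"
    unfolding E_eq using cont by (intro continuous_intros)
  ultimately show ?thesis
    using zero_iff by blast
qed

end
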